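(* Let $N\ge2$, $\Omega=\mathbb{R}^{N-1}\times(0,\infty)$, $\epsilon>0$, $\delta>0$, $k\ge0$. Let $u$ be a bounded classical solution of problem (HDD) (if $k>0$) or of problem (HD) (if $k=0$) with zero initial data $\phi\equiv0$ in $\Omega$, $\psi\equiv0$ on $\partial\Omega$. Assume that for every $T\in(0,\infty)$ there exists $\gamma>0$ such that \[\int_0^T\int_{B^+_R(0)\setminus B^+_{R/2}(0)}u^2\,dx\,dt+\int_0^T\int_{B'_R(0)\setminus B'_{R/2}(0)}u^2\,d\sigma(x)\,dt\le\exp(\gamma R^2)\quad\text{for all }R>1.\] Then $u\equiv0$ in $\overline\Omega\times(0,\infty)$.
   Context: $x=(x',x_N)$, $\partial\Omega\cong\mathbb{R}^{N-1}$ with surface measure $d\sigma$, $\Delta'$ the Laplacian in $x'$. $B^+_r(x)=\{y\in\Omega:|x-y|<r\}$, $B'_r(x)=\{y\in\partial\Omega:|x-y|<r\}$. Problem (HDD): $\epsilon\partial_tu-\Delta u=0$ in $\Omega\times(0,\infty)$; $\delta\partial_tu-k\Delta'u-\partial_{x_N}u=0$ on $\partial\Omega\times(0,\infty)$; $u=\phi$ in $\Omega\times\{0\}$; $u=\psi$ on $\partial\Omega\times\{0\}$; (HD) is the same with $k=0$. A classical solution of (HDD) is $u$ on $\overline\Omega\times[0,\infty)$ with $u\in C^{2;1}(\overline\Omega\times(0,\infty))\cap C(\Omega\times[0,\infty))$, $u|_{\partial\Omega}\in C(\partial\Omega\times[0,\infty))$, satisfying the equations pointwise; a classical solution of (HD)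 is $u$ with $u\in C^{2;1}(\Omega\times(0,\infty))\cap C^{1;1}(\overline\Omega\times(0,\infty))\cap C(\Omega\times[0,\infty))$, $u|_{\partial\Omega}\in C(\partial\Omega\times[0,\infty))$, satisfying the equations pointwise. *)

theory Defs
  imports "HOL-Analysis.Analysis"
begin

text \<open>Points of the closed half-space are pairs (x', x_N) with x' in 'a (= R^(N-1)).
  Omega = {x_N > 0}, its closure = {x_N >= 0}, boundary = {x_N = 0} identified with 'a.\<close>

definition Omega :: "('a::euclidean_space \<times> real) set" where
  "Omega = {x. snd x > 0}"

definition Omega_cl :: "('a::euclidean_space \<times> real) set" where
  "Omega_cl = {x. snd x \<ge> 0}"

definition lap :: "('a::euclidean_space \<Rightarrow>\<^sub>L ('a \<Rightarrow>\<^sub>L real)) \<Rightarrow> real" where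
  "lap H = (\<Sum>b\<in>Basis. blinfun_apply (blinfun_apply H b) b)"

definition lap_tan :: "(('a::euclidean_space \<times> real) \<Rightarrow>\<^sub>L (('a \<times> real) \<Rightarrow>\<^sub>L real)) \<Rightarrow> real" where
  "lap_tan H = (\<Sum>b\<in>Basis. blinfun_apply (blinfun_apply H (b, 0)) (b, 0))"

definition classical_HDD ::
  "real \<Rightarrow> real \<Rightarrow> real \<Rightarrow> (('a::euclidean_space \<times> real) \<Rightarrow> real \<Rightarrow> real)
   \<Rightarrow> (('a \<times> real) \<Rightarrow> real) \<Rightarrow> ('a \<Rightarrow> real) \<Rightarrow> bool" where
  "classical_HDD eps delta k u phi psi \<longleftrightarrow>
    (\<exists>Du D2u ut.
      \<comment> \<open>u in C^{2;1}(closure Omega x (0,inf))\<close>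
      (\<forall>x\<in>Omega_cl. \<forall>t>0.
          ((\<lambda>y. u y t) has_derivative blinfun_apply (Du x t)) (at x within Omega_cl) \<and>
          ((\<lambda>y. Du y t) has_derivative blinfun_apply (D2u x t)) (at x within Omega_cl) \<and>
          ((\<lambda>s. u x s) has_real_derivative ut x t) (at t)) \<and>
      continuous_on (Omega_cl \<times> {0<..}) (\<lambda>(x, t). u x t) \<and>
      continuous_on (Omega_cl \<times> {0<..}) (\<lambda>(x, t). Du x t) \<and>
      continuous_on (Omega_cl \<times> {0<..}) (\<lambda>(x, t). D2u x t) \<and>
      continuous_on (Omega_cl \<times> {0<..}) (\<lambda>(x, t). ut x t) \<and>
      \<comment> \<open>u in C(Omega x [0,inf)), u restricted to boundary in C(boundary x [0,inf))\<close>
      continuous_on (Omega \<times> {0..}) (\<lambda>(x, t). u x t) \<and>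
      continuous_on (UNIV \<times> {0..}) (\<lambda>(y, t). u (y, 0) t) \<and>
      \<comment> \<open>equations\<close>
      (\<forall>x\<in>Omega. \<forall>t>0. eps * ut x t - lap (D2u x t) = 0) \<and>
      (\<forall>y. \<forall>t>0. delta * ut (y, 0) t - k * lap_tan (D2u (y, 0) t)
                   - blinfun_apply (Du (y, 0) t) (0, 1) = 0) \<and>
      (\<forall>x\<in>Omega. u x 0 = phi x) \<and>
      (\<forall>y. u (y, 0) 0 = psi y))"

definition classical_HD ::
  "real \<Rightarrow> real \<Rightarrow> (('a::euclidean_space \<times> real) \<Rightarrow> real \<Rightarrow> real)
   \<Rightarrow> (('a \<times> real) \<Rightarrow> real) \<Rightarrow> ('a \<Rightarrow> real) \<Rightarrow> bool" where
  "classical_HD eps delta u phi psi \<longleftrightarrow>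
    (\<exists>Du D2u ut.
      \<comment> \<open>u in C^{1;1}(closure Omega x (0,inf))\<close>
      (\<forall>x\<in>Omega_cl. \<forall>t>0.
          ((\<lambda>y. u y t) has_derivative blinfun_apply (Du x t)) (at x within Omega_cl) \<and>
          ((\<lambda>s. u x s) has_real_derivative ut x t) (at t)) \<and>
      continuous_on (Omega_cl \<times> {0<..}) (\<lambda>(x, t). u x t) \<and>
      continuous_on (Omega_cl \<times> {0<..}) (\<lambda>(x, t). Du x t) \<and>
      continuous_on (Omega_cl \<times> {0<..}) (\<lambda>(x, t). ut x t) \<and>
      \<comment> \<open>u in C^{2;1}(Omega x (0,inf))\<close>
      (\<forall>x\<in>Omega. \<forall>t>0.
          ((\<lambda>y. Du y t) has_derivative blinfun_apply (D2u x t)) (at x)) \<and>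
      continuous_on (Omega \<times> {0<..}) (\<lambda>(x, t). D2u x t) \<and>
      \<comment> \<open>continuity up to t = 0\<close>
      continuous_on (Omega \<times> {0..}) (\<lambda>(x, t). u x t) \<and>
      continuous_on (UNIV \<times> {0..}) (\<lambda>(y, t). u (y, 0) t) \<and>
      \<comment> \<open>equations\<close>
      (\<forall>x\<in>Omega. \<forall>t>0. eps * ut x t - lap (D2u x t) = 0) \<and>
      (\<forall>y. \<forall>t>0. delta * ut (y, 0) t - blinfun_apply (Du (y, 0) t) (0, 1) = 0) \<and>
      (\<forall>x\<in>Omega. u x 0 = phi x) \<and>
      (\<forall>y. u (y, 0) 0 = psi y))"

end

theory Submission
  imports Defs
begin

(* Since -u is a solution as well, it suffices to show u <= 0. Compare u with the barrier
     a + eta (|x - c|^2 + C t) + beta V(x_N, t),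
     V(z, t) = sqrt (tau / (t + tau)) exp (- eps z^2 / (4 (t + tau))),
   on truncated cylinders (closure Omega  inter  cball c R) x (0, T]. Because eps V_t = V_zz, the
   barrier is a strict supersolution of the heat equation as soon as C eps > 2N, so u - barrier
   has no interior maximum; with beta = 0 and C delta > 2k(N-1) it is also a strict
   supersolution of the dynamic boundary condition, the normal derivative of |x - c|^2 vanishing
   on the boundary when c lies on it. Taking a = beta = 0, R large and letting eta -> 0 yields
   u <= 0, provided u - barrier is asymptotically <= 0 as t -> 0.
   The data are continuous only on Omega x [0, oo) and on the boundary separately, so at a corner
   point (y0, 0) at t = 0 this is the delicate step. There beta > 0 is used: V >= 1/e near the
   boundary for t <= tau, which lets the barrier absorb the boundary at small times, while
   V(z, t) <= sqrt (tau / t), so the heat-kernel term disappears at a fixed time t as tau -> 0. *)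

section \<open>Derivatives at a maximum\<close>

lemma DERIV_nonneg_at_left_max:
  fixes f :: "real \<Rightarrow> real"
  assumes "(f has_real_derivative D) (at t)" "d > 0"
    and "\<And>s. t - d < s \<Longrightarrow> s \<le> t \<Longrightarrow> f s \<le> f t"
  shows "0 \<le> D"
proof (rule ccontr)
  assume "\<not> 0 \<le> D"
  then obtain e where "e > 0" and e: "\<And>r. 0 < r \<Longrightarrow> r < e \<Longrightarrow> f t < f (t - r)"
    using DERIV_neg_dec_left[OF assms(1)] by force
  have "f t < f (t - min e d / 2)" using \<open>e > 0\<close> \<open>d > 0\<close> by (intro e) auto
  moreover have "f (t - min e d / 2) \<le> f t" using \<open>e > 0\<close> \<open>d > 0\<close> by (intro assms(3)) auto
  ultimately show False by simp
qed

lemma DERIV_nonpos_at_right_max: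
  fixes f :: "real \<Rightarrow> real"
  assumes "(f has_real_derivative D) (at t within {t..<t + d})" "d > 0"
    and "\<And>s. t \<le> s \<Longrightarrow> s < t + d \<Longrightarrow> f s \<le> f t"
  shows "D \<le> 0"
proof (rule ccontr)
  assume "\<not> D \<le> 0"
  then obtain e where "e > 0" and e: "\<And>r. 0 < r \<Longrightarrow> r < d \<Longrightarrow> r < e \<Longrightarrow> f t < f (t + r)"
    using has_real_derivative_pos_inc_right[OF assms(1)] by force
  have "f t < f (t + min e d / 2)" using \<open>e > 0\<close> \<open>d > 0\<close> by (intro e) auto
  moreover have "f (t + min e d / 2) \<le> f t" using \<open>e > 0\<close> \<open>d > 0\<close> by (intro assms(3)) auto
  ultimately show False by simp
qed

lemma DERIV2_nonpos_at_local_max: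
  fixes f f' :: "real \<Rightarrow> real"
  assumes "d > 0" and f': "\<And>s. \<bar>s - t\<bar> < d \<Longrightarrow> (f has_real_derivative f' s) (at s)"
    and f'': "(f' has_real_derivative D) (at t)"
    and max: "\<And>s. \<bar>s - t\<bar> < d \<Longrightarrow> f s \<le> f t"
  shows "D \<le> 0"
proof (rule ccontr)
  assume "\<not> D \<le> 0"
  have "f' t = 0"
    using DERIV_local_max[of f "f' t" t d] assms by (auto simp: abs_minus_commute)
  then obtain e where "e > 0" and e: "\<And>r. 0 < r \<Longrightarrow> r < e \<Longrightarrow> 0 < f' (t + r)"
    using DERIV_pos_inc_right[OF f''] \<open>\<not> D \<le> 0\<close> by force
  define r where "r = min e d / 2"
  have r: "0 < r" "r < e" "r < d" using \<open>e > 0\<close> \<open>d > 0\<close> by (auto simp: r_def)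
  obtain z where z: "t < z" "z < t + r" "f (t + r) - f t = r * f' z"
    using MVT2[of t "t + r" f f'] r f' by auto
  have "0 < f' z" using e[of "z - t"] z r by simp
  then have "f t < f (t + r)" using z r by (simp add: algebra_simps)
  with max[of "t + r"] r show False by simp
qed

lemma has_real_derivative_along_line:
  fixes F :: "'a::real_normed_vector \<Rightarrow> real"
  assumes "(F has_derivative F') (at (x + s *\<^sub>R b) within S)" "(\<lambda>r. x + r *\<^sub>R b) ` T \<subseteq> S"
  shows "((\<lambda>r. F (x + r *\<^sub>R b)) has_real_derivative F' b) (at s within T)"
proof -
  have "((\<lambda>r. x + r *\<^sub>R b) has_derivative (\<lambda>r. r *\<^sub>R b)) (at s within T)"
    by (auto intro!: derivative_eq_intros)
  then have "((\<lambda>r. F (x + r *\<^sub>R b)) has_derivative (\<lambda>r. F' (r *\<^sub>R b))) (at s within T)"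
    using has_derivative_subset[OF assms] by (rule has_derivative_in_compose)
  moreover have "(\<lambda>r. F' (r *\<^sub>R b)) = (*) (F' b)"
    using has_derivative_bounded_linear[OF assms(1)]
    by (auto simp: bounded_linear.linear linear_scale mult.commute)
  ultimately show ?thesis by (simp add: has_field_derivative_def)
qed

lemma directional_derivative_le_of_touching:
  fixes F :: "'a::real_normed_vector \<Rightarrow> real"
  assumes F': "(F has_derivative F') (at x within S)" and "d > 0"
    and line: "\<And>s. 0 \<le> s \<Longrightarrow> s < d \<Longrightarrow> x + s *\<^sub>R b \<in> S"
    and touch: "\<And>s. 0 \<le> s \<Longrightarrow> s < d \<Longrightarrow> F (x + s *\<^sub>R b) - h s \<le> F x - h 0"
    and h': "(h has_real_derivative h') (at 0)"
  shows "F' b \<le> h'"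
proof -
  have "((\<lambda>r. F (x + r *\<^sub>R b)) has_real_derivative F' b) (at 0 within {0..<0 + d})"
    using F' line by (intro has_real_derivative_along_line) auto
  moreover have "(h has_real_derivative h') (at 0 within {0..<0 + d})"
    using h' by (rule has_field_derivative_at_within)
  ultimately have "((\<lambda>r. F (x + r *\<^sub>R b) - h r) has_real_derivative F' b - h') (at 0 within {0..<0 + d})"
    by (rule DERIV_diff)
  then have "F' b - h' \<le> 0"
    using \<open>d > 0\<close> by (rule DERIV_nonpos_at_right_max) (use touch in auto)
  then show ?thesis by simp
qed

lemma second_directional_derivative_le_of_touching:
  fixes F :: "'a::real_normed_vector \<Rightarrow> real"
  assumes DF: "\<And>p. p \<in> S \<Longrightarrow> (F has_derivative blinfun_apply (DF p)) (at p within S)"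
    and D2: "(DF has_derivative blinfun_apply D2) (at x within S)"
    and "d > 0" and line: "\<And>s. \<bar>s\<bar> < d \<Longrightarrow> x + s *\<^sub>R b \<in> S"
    and touch: "\<And>s. \<bar>s\<bar> < d \<Longrightarrow> F (x + s *\<^sub>R b) - h s \<le> F x - h 0"
    and h': "\<And>s. (h has_real_derivative h' s) (at s)" and h'': "(h' has_real_derivative h'') (at 0)"
  shows "D2 b b \<le> h''"
proof -
  let ?T = "{-d<..<d}"
  have img: "(\<lambda>r. x + r *\<^sub>R b) ` ?T \<subseteq> S" using line by auto
  have first: "((\<lambda>r. F (x + r *\<^sub>R b) - h r) has_real_derivative DF (x + s *\<^sub>R b) b - h' s) (at s)"
    if "\<bar>s - 0\<bar> < d" for s
  proof -
    have "((\<lambda>r. F (x + r *\<^sub>R b)) has_real_derivative DF (x + s *\<^sub>R b) b) (at s within ?T)"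
      using DF line that img by (intro has_real_derivative_along_line) auto
    then have "((\<lambda>r. F (x + r *\<^sub>R b)) has_real_derivative DF (x + s *\<^sub>R b) b) (at s)"
      using that by (simp add: at_within_open[OF _ open_greaterThanLessThan] abs_less_iff)
    then show ?thesis using h' by (rule DERIV_diff)
  qed
  have second: "((\<lambda>r. DF (x + r *\<^sub>R b) b - h' r) has_real_derivative D2 b b - h'') (at 0)"
  proof -
    have "((\<lambda>p. DF p b) has_derivative (\<lambda>v. D2 v b)) (at x within S)"
      using D2 by (rule bounded_linear.has_derivative[OF bounded_linear_apply_blinfun])
    then have "((\<lambda>r. DF (x + r *\<^sub>R b) b) has_real_derivative D2 b b) (at 0 within ?T)"
      using img by (intro has_real_derivative_along_line) simp_all
    then have "((\<lambda>r. DF (x + r *\<^sub>R b) b) has_real_derivative D2 b b) (at 0)"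
      using \<open>d > 0\<close> by (simp add: at_within_open[OF _ open_greaterThanLessThan])
    then show ?thesis using h'' by (rule DERIV_diff)
  qed
  have "D2 b b - h'' \<le> 0"
    by (rule DERIV2_nonpos_at_local_max[OF \<open>d > 0\<close> first second]) (use touch in auto)
  then show ?thesis by simp
qed

section \<open>The barrier\<close>

(* sqrt (tau / (t + tau)) * exp (- eps z^2 / (4 (t + tau))): the fundamental solution of
   eps V_t = V_zz started at time -tau, normalised to 1 at z = 0, t = 0. *)
definition heat_kernel :: "real \<Rightarrow> real \<Rightarrow> real \<Rightarrow> real \<Rightarrow> real" where
  "heat_kernel eps \<tau> z t = exp ((ln \<tau> - ln (t + \<tau>)) / 2 - eps * z\<^sup>2 / (4 * (t + \<tau>)))"

definition heat_kernel_dt :: "real \<Rightarrow> real \<Rightarrow> real \<Rightarrow> real \<Rightarrow> real" where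
  "heat_kernel_dt eps \<tau> z t =
     heat_kernel eps \<tau> z t * (eps * z\<^sup>2 / (4 * (t + \<tau>)\<^sup>2) - 1 / (2 * (t + \<tau>)))"

definition heat_kernel_dz :: "real \<Rightarrow> real \<Rightarrow> real \<Rightarrow> real \<Rightarrow> real" where
  "heat_kernel_dz eps \<tau> z t = heat_kernel eps \<tau> z t * (- (eps * z / (2 * (t + \<tau>))))"

definition heat_kernel_dzz :: "real \<Rightarrow> real \<Rightarrow> real \<Rightarrow> real \<Rightarrow> real" where
  "heat_kernel_dzz eps \<tau> z t =
     heat_kernel eps \<tau> z t * ((eps * z / (2 * (t + \<tau>)))\<^sup>2 - eps / (2 * (t + \<tau>)))"

lemma heat_kernel_pos: "heat_kernel eps \<tau> z t > 0"
  by (simp add: heat_kernel_def)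

lemma heat_kernel_heat_equation: "eps * heat_kernel_dt eps \<tau> z t = heat_kernel_dzz eps \<tau> z t"
  by (simp add: heat_kernel_dt_def heat_kernel_dzz_def power2_eq_square algebra_simps)

lemma has_real_derivative_heat_kernel_t:
  assumes "t + \<tau> > 0"
  shows "((\<lambda>s. heat_kernel eps \<tau> z s) has_real_derivative heat_kernel_dt eps \<tau> z t) (at t)"
proof -
  have "((\<lambda>w. (ln \<tau> - ln w) / 2 - eps * z\<^sup>2 / (4 * w)) has_real_derivative
      eps * z\<^sup>2 / (4 * w\<^sup>2) - 1 / (2 * w)) (at w)" if "w > 0" for w
    using that by (auto intro!: derivative_eq_intros simp: field_simps power2_eq_square)
  moreover have "((\<lambda>s. s + \<tau>) has_real_derivative 1) (at t)"
    by (auto intro!: derivative_eq_intros)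
  ultimately have "((\<lambda>s. (ln \<tau> - ln (s + \<tau>)) / 2 - eps * z\<^sup>2 / (4 * (s + \<tau>))) has_real_derivative
      eps * z\<^sup>2 / (4 * (t + \<tau>)\<^sup>2) - 1 / (2 * (t + \<tau>))) (at t)"
    using DERIV_chain2[of _ _ "\<lambda>s. s + \<tau>"] assms by fastforce
  then show ?thesis
    unfolding heat_kernel_def heat_kernel_dt_def by (rule DERIV_fun_exp)
qed

lemma has_real_derivative_heat_kernel_z:
  assumes "t + \<tau> > 0"
  shows "((\<lambda>z. heat_kernel eps \<tau> z t) has_real_derivative heat_kernel_dz eps \<tau> z t) (at z)"
proof -
  have "((\<lambda>z. (ln \<tau> - ln T) / 2 - eps * z\<^sup>2 / (4 * T)) has_real_derivative
      - (eps * z / (2 * T))) (at z)" if "T \<noteq> 0" for T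
    using that by (auto intro!: derivative_eq_intros simp: field_simps)
  from this[of "t + \<tau>"] show ?thesis
    using assms unfolding heat_kernel_def heat_kernel_dz_def by (intro DERIV_fun_exp) simp
qed

lemma has_real_derivative_heat_kernel_dz:
  assumes "t + \<tau> > 0"
  shows "((\<lambda>z. heat_kernel_dz eps \<tau> z t) has_real_derivative heat_kernel_dzz eps \<tau> z t) (at z)"
proof -
  have "((\<lambda>z. - (eps * z / (2 * (t + \<tau>)))) has_real_derivative - (eps / (2 * (t + \<tau>)))) (at z)"
    using assms by (auto intro!: derivative_eq_intros)
  from DERIV_mult[OF has_real_derivative_heat_kernel_z[OF assms] this]
  have "((\<lambda>z. heat_kernel_dz eps \<tau> z t) has_real_derivative
      heat_kernel_dz eps \<tau> z t * (- (eps * z / (2 * (t + \<tau>))))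
        + - (eps / (2 * (t + \<tau>))) * heat_kernel eps \<tau> z t) (at z)"
    by (simp add: heat_kernel_dz_def)
  moreover have "heat_kernel_dz eps \<tau> z t * (- (eps * z / (2 * (t + \<tau>))))
      + - (eps / (2 * (t + \<tau>))) * heat_kernel eps \<tau> z t = heat_kernel_dzz eps \<tau> z t"
    by (simp add: heat_kernel_dz_def heat_kernel_dzz_def power2_eq_square algebra_simps)
  ultimately show ?thesis by simp
qed

lemma heat_kernel_ge_exp_minus_one:
  assumes "0 \<le> t" "t \<le> \<tau>" "0 < \<tau>" "0 \<le> eps" "eps * z\<^sup>2 \<le> 2 * \<tau>"
  shows "exp (-1) \<le> heat_kernel eps \<tau> z t"
proof -
  have "ln (t + \<tau>) \<le> ln (2 * \<tau>)" using assms by simp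
  then have "ln (t + \<tau>) \<le> ln 2 + ln \<tau>" using assms by (simp add: ln_mult)
  then have "(ln \<tau> - ln (t + \<tau>)) / 2 \<ge> - 1 / 2" using ln_2_less_1 by simp
  moreover have "eps * z\<^sup>2 / (4 * (t + \<tau>)) \<le> 1 / 2"
    using assms by (simp add: field_simps)
  ultimately have "-1 \<le> (ln \<tau> - ln (t + \<tau>)) / 2 - eps * z\<^sup>2 / (4 * (t + \<tau>))" by linarith
  then show ?thesis unfolding heat_kernel_def by simp
qed

lemma heat_kernel_ge_exp_minus_one_near_boundary:
  assumes "\<tau> > 0" "0 \<le> eps"
  obtains d where "d > 0" "\<And>z t. \<bar>z\<bar> < d \<Longrightarrow> 0 \<le> t \<Longrightarrow> t < d \<Longrightarrow> exp (-1) \<le> heat_kernel eps \<tau> z t"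
proof
  define d where "d = min \<tau> (min 1 (2 * \<tau> / (eps + 1)))"
  show "d > 0" using assms by (simp add: d_def)
  fix z t assume "\<bar>z\<bar> < d" "0 \<le> t" "t < d"
  have "\<bar>z\<bar> \<le> 1" using \<open>\<bar>z\<bar> < d\<close> by (simp add: d_def)
  then have "z\<^sup>2 \<le> \<bar>z\<bar>"
    by (metis abs_ge_zero mult_left_le_one_le power2_abs power2_eq_square)
  then have "eps * z\<^sup>2 \<le> eps * (2 * \<tau> / (eps + 1))"
    using \<open>\<bar>z\<bar> < d\<close> assms by (intro mult_left_mono) (auto simp: d_def)
  also have "\<dots> \<le> 2 * \<tau>" using assms by (simp add: field_simps)
  finally show "exp (-1) \<le> heat_kernel eps \<tau> z t"
    using \<open>0 \<le> t\<close> \<open>t < d\<close> assms by (intro heat_kernel_ge_exp_minus_one) (auto simp: d_def)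
qed

lemma heat_kernel_le:
  assumes "0 < t" "0 < q" "0 \<le> eps"
  shows "heat_kernel eps (t * q\<^sup>2) z t \<le> q"
proof -
  have "ln t \<le> ln (t + t * q\<^sup>2)" using assms by (simp add: add_pos_nonneg)
  then have "ln (t * q\<^sup>2) - ln (t + t * q\<^sup>2) \<le> 2 * ln q"
    using assms by (simp add: ln_mult ln_realpow)
  then have "(ln (t * q\<^sup>2) - ln (t + t * q\<^sup>2)) / 2 \<le> ln q" by simp
  moreover have "eps * z\<^sup>2 / (4 * (t + t * q\<^sup>2)) \<ge> 0" using assms by simp
  ultimately have "(ln (t * q\<^sup>2) - ln (t + t * q\<^sup>2)) / 2 - eps * z\<^sup>2 / (4 * (t + t * q\<^sup>2)) \<le> ln q"
    by linarith
  then have "heat_kernel eps (t * q\<^sup>2) z t \<le> exp (ln q)"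
    unfolding heat_kernel_def by (rule exp_mono)
  then show ?thesis using assms by simp
qed

definition barrier ::
  "real \<Rightarrow> real \<Rightarrow> real \<Rightarrow> ('a::euclidean_space \<times> real) \<Rightarrow> real \<Rightarrow> real \<Rightarrow> real
   \<Rightarrow> ('a \<times> real) \<Rightarrow> real \<Rightarrow> real" where
  "barrier eps a \<eta> c C \<beta> \<tau> x t =
     a + \<eta> * ((norm (x - c))\<^sup>2 + C * t) + \<beta> * heat_kernel eps \<tau> (snd x) t"

lemma barrier_nonneg:
  assumes "a \<ge> 0" "\<eta> \<ge> 0" "C \<ge> 0" "t \<ge> 0" "\<beta> \<ge> 0"
  shows "barrier eps a \<eta> c C \<beta> \<tau> x t \<ge> 0"
  unfolding barrier_def using assms heat_kernel_pos[of eps \<tau> "snd x" t]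
  by (intro add_nonneg_nonneg mult_nonneg_nonneg) auto

lemma continuous_on_barrier:
  assumes "\<tau> > 0"
  shows "continuous_on (UNIV \<times> {0..}) (\<lambda>(x, t). barrier eps a \<eta> c C \<beta> \<tau> x t)"
  unfolding barrier_def heat_kernel_def case_prod_beta using assms
  by (intro continuous_intros) (auto simp: add_pos_nonneg)

lemma barrier_along_line:
  assumes "norm b = 1"
  shows "barrier eps a \<eta> c C \<beta> \<tau> (x + s *\<^sub>R b) t =
    a + \<eta> * ((norm (x - c))\<^sup>2 + 2 * s * inner (x - c) b + s\<^sup>2 + C * t)
      + \<beta> * heat_kernel eps \<tau> (snd x + s * snd b) t"
proof -
  have "(norm (x + s *\<^sub>R b - c))\<^sup>2 = (norm (x - c))\<^sup>2 + 2 * s * inner (x - c) b + s\<^sup>2 * (norm b)\<^sup>2"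
    unfolding power2_norm_eq_inner
    by (simp add: inner_add_left inner_add_right inner_diff_left inner_diff_right inner_commute
        power2_eq_square algebra_simps)
  then show ?thesis using assms by (simp add: barrier_def)
qed

lemma has_real_derivative_barrier_along_line:
  assumes "t + \<tau> > 0"
  shows "((\<lambda>s. a + \<eta> * ((norm (x - c))\<^sup>2 + 2 * s * inner (x - c) b + s\<^sup>2 + C * t)
      + \<beta> * heat_kernel eps \<tau> (snd x + s * snd b) t) has_real_derivative
      \<eta> * (2 * inner (x - c) b + 2 * s) + \<beta> * (heat_kernel_dz eps \<tau> (snd x + s * snd b) t * snd b))
    (at s)"
proof -
  have "((\<lambda>s. snd x + s * snd b) has_real_derivative snd b) (at s)"
    by (auto intro!: derivative_eq_intros)
  from DERIV_chain2[OF has_real_derivative_heat_kernel_z[OF assms] this]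
  show ?thesis by (auto intro!: derivative_eq_intros simp: algebra_simps)
qed

lemma has_real_derivative2_barrier_along_line:
  assumes "t + \<tau> > 0"
  shows "((\<lambda>s. \<eta> * (2 * inner (x - c) b + 2 * s)
      + \<beta> * (heat_kernel_dz eps \<tau> (snd x + s * snd b) t * snd b)) has_real_derivative
      2 * \<eta> + \<beta> * heat_kernel_dzz eps \<tau> (snd x) t * (snd b)\<^sup>2) (at 0)"
proof -
  have "((\<lambda>s. snd x + s * snd b) has_real_derivative snd b) (at 0)"
    by (auto intro!: derivative_eq_intros)
  from DERIV_chain2[OF has_real_derivative_heat_kernel_dz[OF assms] this]
  show ?thesis by (auto intro!: derivative_eq_intros simp: algebra_simps power2_eq_square)
qed

lemma has_real_derivative_barrier_t:
  assumes "t + \<tau> > 0"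
  shows "((\<lambda>s. barrier eps a \<eta> c C \<beta> \<tau> x s) has_real_derivative
    \<eta> * C + \<beta> * heat_kernel_dt eps \<tau> (snd x) t) (at t)"
  unfolding barrier_def using has_real_derivative_heat_kernel_t[OF assms, of eps "snd x"]
  by (auto intro!: derivative_eq_intros)

lemma time_derivative_ge_barrier:
  assumes g': "(g has_real_derivative g') (at t)" and "t + \<tau> > 0" "d > 0"
    and touch: "\<And>s. t - d < s \<Longrightarrow> s \<le> t \<Longrightarrow>
      g s - barrier eps a \<eta> c C \<beta> \<tau> x s \<le> g t - barrier eps a \<eta> c C \<beta> \<tau> x t"
  shows "\<eta> * C + \<beta> * heat_kernel_dt eps \<tau> (snd x) t \<le> g'"
proof -
  have "((\<lambda>s. g s - barrier eps a \<eta> c C \<beta> \<tau> x s) has_real_derivative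
      g' - (\<eta> * C + \<beta> * heat_kernel_dt eps \<tau> (snd x) t)) (at t)"
    using g' has_real_derivative_barrier_t[OF \<open>t + \<tau> > 0\<close>] by (rule DERIV_diff)
  from DERIV_nonneg_at_left_max[OF this \<open>d > 0\<close> touch] show ?thesis by simp
qed

lemma directional_derivative_le_barrier:
  fixes F :: "'a::euclidean_space \<times> real \<Rightarrow> real"
  assumes F': "(F has_derivative F') (at x within S)" and "d > 0"
    and line: "\<And>s. 0 \<le> s \<Longrightarrow> s < d \<Longrightarrow> x + s *\<^sub>R b \<in> S"
    and touch: "\<And>s. 0 \<le> s \<Longrightarrow> s < d \<Longrightarrow>
      F (x + s *\<^sub>R b) - barrier eps a \<eta> c C \<beta> \<tau> (x + s *\<^sub>R b) t
        \<le> F x - barrier eps a \<eta> c C \<beta> \<tau> x t"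
    and "norm b = 1" "t + \<tau> > 0"
  shows "F' b \<le> 2 * \<eta> * inner (x - c) b + \<beta> * heat_kernel_dz eps \<tau> (snd x) t * snd b"
proof -
  let ?h = "\<lambda>s. barrier eps a \<eta> c C \<beta> \<tau> (x + s *\<^sub>R b) t"
  have "(?h has_real_derivative \<eta> * (2 * inner (x - c) b + 2 * 0)
      + \<beta> * (heat_kernel_dz eps \<tau> (snd x + 0 * snd b) t * snd b)) (at 0)"
    unfolding barrier_along_line[OF \<open>norm b = 1\<close>]
    by (rule has_real_derivative_barrier_along_line[OF \<open>t + \<tau> > 0\<close>])
  from directional_derivative_le_of_touching[OF F' \<open>d > 0\<close> line _ this] touch
  show ?thesis by (simp add: algebra_simps)
qed

lemma second_derivative_le_barrier:
  fixes F :: "'a::euclidean_space \<times> real \<Rightarrow> real"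
  assumes DF: "\<And>p. p \<in> S \<Longrightarrow> (F has_derivative blinfun_apply (DF p)) (at p within S)"
    and D2: "(DF has_derivative blinfun_apply D2) (at x within S)"
    and "d > 0" and line: "\<And>s. \<bar>s\<bar> < d \<Longrightarrow> x + s *\<^sub>R b \<in> S"
    and touch: "\<And>s. \<bar>s\<bar> < d \<Longrightarrow>
      F (x + s *\<^sub>R b) - barrier eps a \<eta> c C \<beta> \<tau> (x + s *\<^sub>R b) t
        \<le> F x - barrier eps a \<eta> c C \<beta> \<tau> x t"
    and "norm b = 1" "t + \<tau> > 0"
  shows "D2 b b \<le> 2 * \<eta> + \<beta> * heat_kernel_dzz eps \<tau> (snd x) t * (snd b)\<^sup>2"
proof -
  let ?h = "\<lambda>s. barrier eps a \<eta> c C \<beta> \<tau> (x + s *\<^sub>R b) t"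
  let ?h' = "\<lambda>s. \<eta> * (2 * inner (x - c) b + 2 * s)
    + \<beta> * (heat_kernel_dz eps \<tau> (snd x + s * snd b) t * snd b)"
  have "(?h has_real_derivative ?h' s) (at s)" for s
    unfolding barrier_along_line[OF \<open>norm b = 1\<close>]
    by (rule has_real_derivative_barrier_along_line[OF \<open>t + \<tau> > 0\<close>])
  from second_directional_derivative_le_of_touching[OF DF D2 \<open>d > 0\<close> line _ this
      has_real_derivative2_barrier_along_line[OF \<open>t + \<tau> > 0\<close>]] touch
  show ?thesis by simp
qed

lemma sum_Basis_snd_squared: "(\<Sum>b\<in>(Basis :: ('a::euclidean_space \<times> real) set). (snd b)\<^sup>2) = 1"
proof -
  have "(\<Sum>b\<in>(Basis :: ('a \<times> real) set). inner (0, 1) b * inner (0, 1) b) = inner (0, 1) ((0::'a), 1::real)"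
    by (rule euclidean_inner[symmetric])
  then show ?thesis by (simp add: inner_prod_def power2_eq_square)
qed

lemma continuous_attains_sup_if_small_near_complement:
  fixes F :: "'a::metric_space \<Rightarrow> real"
  assumes K: "compact K" and "A \<subseteq> K" and cont: "continuous_on A F" and "p0 \<in> A"
    and small: "\<And>q. q \<in> K - A \<Longrightarrow> \<exists>d>0. \<forall>p\<in>A. dist p q < d \<longrightarrow> F p < F p0"
  obtains p where "p \<in> A" "\<And>p'. p' \<in> A \<Longrightarrow> F p' \<le> F p"
proof -
  define A' where "A' = {p\<in>A. F p0 \<le> F p}"
  have "closed A'"
    unfolding closed_sequential_limits
  proof (intro allI impI)
    fix xs l assume "(\<forall>n. xs n \<in> A') \<and> xs \<longlonglongrightarrow> l"
    then have xs: "\<And>n. xs n \<in> A" "\<And>n. F p0 \<le> F (xs n)" and lim: "xs \<longlonglongrightarrow> l"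
      by (auto simp: A'_def)
    have "l \<in> K"
      using compact_imp_closed[OF K] xs(1) \<open>A \<subseteq> K\<close> lim
      unfolding closed_sequential_limits by blast
    show "l \<in> A'"
    proof (cases "l \<in> A")
      case True
      have "(F \<circ> xs) \<longlonglongrightarrow> F l"
        using cont True xs(1) lim unfolding continuous_on_sequentially by blast
      then have "F p0 \<le> F l" by (rule LIMSEQ_le_const) (use xs(2) in auto)
      with True show ?thesis by (simp add: A'_def)
    next
      case False
      then obtain d where "d > 0" and d: "\<And>p. p \<in> A \<Longrightarrow> dist p l < d \<Longrightarrow> F p < F p0"
        using small \<open>l \<in> K\<close> by blast
      obtain n where "dist (xs n) l < d" using lim \<open>d > 0\<close> unfolding lim_sequentially by blast
      with d[OF xs(1)] xs(2)[of n] show ?thesis by force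
    qed
  qed
  then have "compact (K \<inter> A')" by (rule compact_Int_closed[OF K])
  moreover have "K \<inter> A' = A'" using \<open>A \<subseteq> K\<close> by (auto simp: A'_def)
  ultimately have "compact A'" by simp
  moreover have "A' \<noteq> {}" using \<open>p0 \<in> A\<close> by (auto simp: A'_def)
  moreover have "continuous_on A' F" using cont by (rule continuous_on_subset) (auto simp: A'_def)
  ultimately obtain p where "p \<in> A'" and p: "\<And>p'. p' \<in> A' \<Longrightarrow> F p' \<le> F p"
    using continuous_attains_sup by metis
  show ?thesis
  proof
    show "p \<in> A" using \<open>p \<in> A'\<close> by (simp add: A'_def)
    show "F p' \<le> F p" if "p' \<in> A" for p'
      using p[of p'] \<open>p \<in> A'\<close> that by (force simp: A'_def)
  qed
qed

lemma max_in_cylinder_is_local_max: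
  fixes f :: "'a::real_normed_vector \<Rightarrow> real \<Rightarrow> real"
  assumes "norm (x - c) < R" "0 < t" "t \<le> T" and "x \<in> S"
    and max: "\<And>y s. y \<in> S \<Longrightarrow> norm (y - c) \<le> R \<Longrightarrow> 0 < s \<Longrightarrow> s \<le> T \<Longrightarrow> f y s \<le> f x t"
  obtains d where "d > 0" "\<And>y. y \<in> S \<Longrightarrow> y \<in> ball x d \<Longrightarrow> f y t \<le> f x t"
    "\<And>s. t - d < s \<Longrightarrow> s \<le> t \<Longrightarrow> f x s \<le> f x t"
proof
  show "min (R - norm (x - c)) t > 0" using assms by simp
  show "f y t \<le> f x t" if "y \<in> S" "y \<in> ball x (min (R - norm (x - c)) t)" for y
  proof (rule max[OF \<open>y \<in> S\<close> _ \<open>0 < t\<close> \<open>t \<le> T\<close>])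
    show "norm (y - c) \<le> R"
      using norm_triangle_ineq[of "x - c" "y - x"] that(2) by (simp add: dist_norm norm_minus_commute)
  qed
  show "f x s \<le> f x t" if "t - min (R - norm (x - c)) t < s" "s \<le> t" for s
    using max[OF \<open>x \<in> S\<close>] assms that by simp
qed

section \<open>Weak maximum principle\<close>

(* (HDD) and (HD) in one form: for k = 0 no second derivatives are needed on the boundary. *)
locale zero_data_bounded_solution =
  fixes u :: "('a::euclidean_space \<times> real) \<Rightarrow> real \<Rightarrow> real"
    and Du :: "('a \<times> real) \<Rightarrow> real \<Rightarrow> (('a \<times> real) \<Rightarrow>\<^sub>L real)"
    and D2u :: "('a \<times> real) \<Rightarrow> real \<Rightarrow> (('a \<times> real) \<Rightarrow>\<^sub>L (('a \<times> real) \<Rightarrow>\<^sub>L real))"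
    and ut :: "('a \<times> real) \<Rightarrow> real \<Rightarrow> real"
    and eps delta k M :: real
  assumes eps_pos: "eps > 0" and delta_pos: "delta > 0" and k_nonneg: "k \<ge> 0"
    and Du: "\<And>x t. x \<in> Omega_cl \<Longrightarrow> t > 0 \<Longrightarrow>
      ((\<lambda>y. u y t) has_derivative blinfun_apply (Du x t)) (at x within Omega_cl)"
    and ut: "\<And>x t. x \<in> Omega_cl \<Longrightarrow> t > 0 \<Longrightarrow> ((\<lambda>s. u x s) has_real_derivative ut x t) (at t)"
    and D2u: "\<And>x t. x \<in> Omega \<Longrightarrow> t > 0 \<Longrightarrow>
      ((\<lambda>y. Du y t) has_derivative blinfun_apply (D2u x t)) (at x within Omega_cl)"
    and D2u_boundary: "\<And>y t. k > 0 \<Longrightarrow> t > 0 \<Longrightarrow>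
      ((\<lambda>x. Du x t) has_derivative blinfun_apply (D2u (y, 0) t)) (at (y, 0) within Omega_cl)"
    and continuous_solution: "continuous_on (Omega_cl \<times> {0<..}) (\<lambda>(x, t). u x t)"
    and continuous_initial: "continuous_on (Omega \<times> {0..}) (\<lambda>(x, t). u x t)"
    and continuous_boundary: "continuous_on (UNIV \<times> {0..}) (\<lambda>(y, t). u (y, 0) t)"
    and heat_eq: "\<And>x t. x \<in> Omega \<Longrightarrow> t > 0 \<Longrightarrow> eps * ut x t = lap (D2u x t)"
    and boundary_eq: "\<And>y t. t > 0 \<Longrightarrow>
      delta * ut (y, 0) t = k * lap_tan (D2u (y, 0) t) + Du (y, 0) t (0, 1)"
    and initial: "\<And>x. x \<in> Omega \<Longrightarrow> u x 0 = 0"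
    and initial_boundary: "\<And>y. u (y, 0) 0 = 0"
    and bounded: "\<And>x t. x \<in> Omega_cl \<Longrightarrow> t \<ge> 0 \<Longrightarrow> \<bar>u x t\<bar> \<le> M"
begin

lemma le_bound: "x \<in> Omega_cl \<Longrightarrow> t \<ge> 0 \<Longrightarrow> u x t \<le> M"
  using bounded by fastforce

lemma bound_nonneg: "M \<ge> 0"
  using bounded[of 0 0] by (simp add: Omega_cl_def)

lemma barrier_slope_exists:
  obtains C where "C > 0" "C * eps > 2 * DIM('a \<times> real)" "C * delta > 2 * k * DIM('a)"
proof
  define C where "C = 2 * DIM('a \<times> real) / eps + 2 * k * DIM('a) / delta + 1"
  have "0 \<le> 2 * DIM('a \<times> real) / eps" "0 \<le> 2 * k * DIM('a) / delta"
    using eps_pos delta_pos k_nonneg by auto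
  then show "C > 0" by (simp add: C_def)
  show "C * eps > 2 * DIM('a \<times> real)"
    using eps_pos delta_pos k_nonneg by (simp add: C_def field_simps add_pos_nonneg)
  show "C * delta > 2 * k * DIM('a)"
    using eps_pos delta_pos k_nonneg by (simp add: C_def field_simps add_pos_nonneg)
qed

lemma no_interior_max:
  assumes "x \<in> Omega" "t > 0" "\<tau> > 0" "\<eta> > 0" "\<beta> \<ge> 0" "C * eps > 2 * DIM('a \<times> real)" "d > 0"
    and max_space: "\<And>y. y \<in> Omega_cl \<Longrightarrow> y \<in> ball x d \<Longrightarrow>
      u y t - barrier eps a \<eta> c C \<beta> \<tau> y t \<le> u x t - barrier eps a \<eta> c C \<beta> \<tau> x t"
    and max_time: "\<And>s. t - d < s \<Longrightarrow> s \<le> t \<Longrightarrow>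
      u x s - barrier eps a \<eta> c C \<beta> \<tau> x s \<le> u x t - barrier eps a \<eta> c C \<beta> \<tau> x t"
  shows False
proof -
  have "t + \<tau> > 0" "x \<in> Omega_cl" using assms by (auto simp: Omega_def Omega_cl_def)
  have time: "\<eta> * C + \<beta> * heat_kernel_dt eps \<tau> (snd x) t \<le> ut x t"
    using ut[OF \<open>x \<in> Omega_cl\<close> \<open>t > 0\<close>] \<open>t + \<tau> > 0\<close> \<open>d > 0\<close> max_time
    by (rule time_derivative_ge_barrier)
  have "min d (snd x) > 0" using \<open>d > 0\<close> \<open>x \<in> Omega\<close> by (simp add: Omega_def)
  have hessian: "D2u x t b b \<le> 2 * \<eta> + \<beta> * heat_kernel_dzz eps \<tau> (snd x) t * (snd b)\<^sup>2"
    if "b \<in> Basis" for b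
  proof -
    have line: "x + s *\<^sub>R b \<in> Omega_cl \<and> x + s *\<^sub>R b \<in> ball x d" if "\<bar>s\<bar> < min d (snd x)" for s
    proof -
      have "dist x (x + s *\<^sub>R b) = \<bar>s\<bar>" using \<open>b \<in> Basis\<close> by (simp add: dist_norm)
      moreover have "snd x - snd (x + s *\<^sub>R b) \<le> dist x (x + s *\<^sub>R b)"
        using dist_snd_le[of x "x + s *\<^sub>R b"] by (simp add: dist_real_def)
      ultimately show ?thesis using that by (simp add: Omega_cl_def)
    qed
    show ?thesis
      using Du[OF _ \<open>t > 0\<close>] D2u[OF \<open>x \<in> Omega\<close> \<open>t > 0\<close>] \<open>min d (snd x) > 0\<close>
        conjunct1[OF line] max_space[OF conjunct1[OF line] conjunct2[OF line]]
        norm_Basis[OF \<open>b \<in> Basis\<close>] \<open>t + \<tau> > 0\<close>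
      by (rule second_derivative_le_barrier)
  qed
  have "lap (D2u x t)
      \<le> (\<Sum>b\<in>(Basis :: ('a \<times> real) set).
            2 * \<eta> + \<beta> * heat_kernel_dzz eps \<tau> (snd x) t * (snd b)\<^sup>2)"
    unfolding lap_def by (intro sum_mono hessian)
  also have "\<dots> = 2 * \<eta> * DIM('a \<times> real) + \<beta> * (eps * heat_kernel_dt eps \<tau> (snd x) t)"
    by (simp add: sum.distrib sum_Basis_snd_squared heat_kernel_heat_equation
        flip: sum_distrib_left)
  finally have "\<eta> * (C * eps) \<le> \<eta> * (2 * DIM('a \<times> real))"
    using time eps_pos heat_eq[OF \<open>x \<in> Omega\<close> \<open>t > 0\<close>]
    by (auto simp: algebra_simps dest: mult_left_mono[of _ _ eps])
  with \<open>\<eta> > 0\<close> \<open>C * eps > 2 * DIM('a \<times> real)\<close> show False by simp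
qed

lemma no_boundary_max:
  assumes "t > 0" "\<tau> > 0" "\<eta> > 0" "snd c = 0" "C * delta > 2 * k * DIM('a)" "d > 0"
    and max_space: "\<And>x. x \<in> Omega_cl \<Longrightarrow> x \<in> ball (y, 0) d \<Longrightarrow>
      u x t - barrier eps a \<eta> c C 0 \<tau> x t \<le> u (y, 0) t - barrier eps a \<eta> c C 0 \<tau> (y, 0) t"
    and max_time: "\<And>s. t - d < s \<Longrightarrow> s \<le> t \<Longrightarrow>
      u (y, 0) s - barrier eps a \<eta> c C 0 \<tau> (y, 0) s \<le> u (y, 0) t - barrier eps a \<eta> c C 0 \<tau> (y, 0) t"
  shows False
proof -
  have "t + \<tau> > 0" "(y, 0) \<in> Omega_cl" using assms by (auto simp: Omega_cl_def)
  have time: "\<eta> * C \<le> ut (y, 0) t"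
    using time_derivative_ge_barrier[OF ut[OF \<open>(y, 0) \<in> Omega_cl\<close> \<open>t > 0\<close>] \<open>t + \<tau> > 0\<close>
        \<open>d > 0\<close> max_time] by simp
  have normal: "Du (y, 0) t (0, 1) \<le> 0"
  proof -
    have line: "(y, 0) + s *\<^sub>R (0, 1) \<in> Omega_cl \<inter> ball (y, 0) d" if "0 \<le> s" "s < d" for s
      using that by (simp add: Omega_cl_def dist_norm)
    have "Du (y, 0) t (0, 1) \<le> 2 * \<eta> * inner ((y, 0) - c) (0, 1)"
      using directional_derivative_le_barrier[OF Du[OF \<open>(y, 0) \<in> Omega_cl\<close> \<open>t > 0\<close>] \<open>d > 0\<close>
          _ max_space _ \<open>t + \<tau> > 0\<close>] line by simp
    then show ?thesis using \<open>snd c = 0\<close> by (simp add: inner_prod_def)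
  qed
  have tangential: "k * lap_tan (D2u (y, 0) t) \<le> k * (2 * \<eta> * DIM('a))"
  proof (cases "k > 0")
    case True
    have "D2u (y, 0) t (b, 0) (b, 0) \<le> 2 * \<eta>" if "b \<in> Basis" for b :: 'a
    proof -
      have line: "(y, 0) + s *\<^sub>R (b, 0) \<in> Omega_cl \<inter> ball (y, 0) d" if "\<bar>s\<bar> < d" for s
        using that \<open>b \<in> Basis\<close> by (simp add: Omega_cl_def dist_norm)
      have "norm (b, 0::real) = 1" using \<open>b \<in> Basis\<close> by (simp add: norm_Pair)
      from second_derivative_le_barrier[OF Du[OF _ \<open>t > 0\<close>] D2u_boundary[OF True \<open>t > 0\<close>]
          \<open>d > 0\<close> _ max_space this \<open>t + \<tau> > 0\<close>] line
      show ?thesis by simp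
    qed
    then have "lap_tan (D2u (y, 0) t) \<le> (\<Sum>b\<in>(Basis :: 'a set). 2 * \<eta>)"
      unfolding lap_tan_def by (intro sum_mono)
    then show ?thesis using True by (simp add: algebra_simps)
  qed (use k_nonneg in simp)
  have "delta * (\<eta> * C) \<le> delta * ut (y, 0) t"
    using time delta_pos by simp
  also have "\<dots> \<le> k * (2 * \<eta> * DIM('a))"
    using boundary_eq[OF \<open>t > 0\<close>] tangential normal by simp
  finally have "\<eta> * (C * delta) \<le> \<eta> * (2 * k * DIM('a))" by (simp add: algebra_simps)
  with \<open>\<eta> > 0\<close> \<open>C * delta > 2 * k * DIM('a)\<close> show False by simp
qed

lemma positive_max_on_cylinder:
  assumes "\<tau> > 0"
    and initial_le: "\<And>x e. x \<in> Omega_cl \<Longrightarrow> norm (x - c) \<le> R \<Longrightarrow> e > 0 \<Longrightarrow>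
      \<exists>d>0. \<forall>y\<in>Omega_cl. \<forall>s. 0 < s \<and> s < d \<and> dist y x < d \<longrightarrow>
        u y s - barrier eps a \<eta> c C \<beta> \<tau> y s < e"
    and "x0 \<in> Omega_cl" "norm (x0 - c) \<le> R" "0 < t0" "t0 \<le> T"
    and "u x0 t0 > barrier eps a \<eta> c C \<beta> \<tau> x0 t0"
  obtains x t where "x \<in> Omega_cl" "norm (x - c) \<le> R" "0 < t" "t \<le> T"
    "u x t > barrier eps a \<eta> c C \<beta> \<tau> x t"
    "\<And>y s. y \<in> Omega_cl \<Longrightarrow> norm (y - c) \<le> R \<Longrightarrow> 0 < s \<Longrightarrow> s \<le> T \<Longrightarrow>
      u y s - barrier eps a \<eta> c C \<beta> \<tau> y s \<le> u x t - barrier eps a \<eta> c C \<beta> \<tau> x t"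
proof -
  define f where "f = (\<lambda>(x, t). u x t - barrier eps a \<eta> c C \<beta> \<tau> x t)"
  define B where "B = Omega_cl \<inter> cball c R"
  have B: "y \<in> B \<longleftrightarrow> y \<in> Omega_cl \<and> norm (y - c) \<le> R" for y
    by (simp add: B_def dist_norm norm_minus_commute)
  have "closed (Omega_cl :: ('a \<times> real) set)"
    unfolding Omega_cl_def by (rule closed_Collect_le) (auto intro: continuous_intros)
  then have "compact (B \<times> {0..T})"
    unfolding B_def by (intro compact_Times closed_Int_compact compact_cball compact_Icc)
  moreover have "B \<times> {0<..T} \<subseteq> B \<times> {0..T}" by auto
  moreover have "continuous_on (B \<times> {0<..T}) f"
  proof -
    have "continuous_on (B \<times> {0<..T}) (\<lambda>(x, t). u x t)"
      by (rule continuous_on_subset[OF continuous_solution]) (auto simp: B_def)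
    moreover have "continuous_on (B \<times> {0<..T}) (\<lambda>(x, t). barrier eps a \<eta> c C \<beta> \<tau> x t)"
      by (rule continuous_on_subset[OF continuous_on_barrier[OF \<open>\<tau> > 0\<close>]]) auto
    ultimately show ?thesis
      unfolding f_def case_prod_beta by (rule continuous_on_diff)
  qed
  moreover have "(x0, t0) \<in> B \<times> {0<..T}" using assms B by auto
  moreover have "\<exists>d>0. \<forall>p\<in>B \<times> {0<..T}. dist p q < d \<longrightarrow> f p < f (x0, t0)"
    if "q \<in> B \<times> {0..T} - B \<times> {0<..T}" for q
  proof -
    have q: "fst q \<in> Omega_cl" "norm (fst q - c) \<le> R" "snd q = 0" using that B by auto
    have "f (x0, t0) > 0" using assms by (simp add: f_def)
    from initial_le[OF q(1,2) this] obtain d where "d > 0"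
      and d: "\<And>y s. y \<in> Omega_cl \<Longrightarrow> 0 < s \<Longrightarrow> s < d \<Longrightarrow> dist y (fst q) < d \<Longrightarrow>
        f (y, s) < f (x0, t0)"
      by (auto simp: f_def)
    have "f (y, s) < f (x0, t0)" if "(y, s) \<in> B \<times> {0<..T}" "dist (y, s) q < d" for y s
    proof (rule d)
      show "y \<in> Omega_cl" "0 < s" using that B by auto
      show "dist y (fst q) < d" using dist_fst_le[of "(y, s)" q] that(2) by simp
      show "s < d" using dist_snd_le[of "(y, s)" q] that(2) q(3) by (simp add: dist_real_def)
    qed
    with \<open>d > 0\<close> show ?thesis by auto
  qed
  ultimately have "\<exists>p\<in>B \<times> {0<..T}. \<forall>p'\<in>B \<times> {0<..T}. f p' \<le> f p"
    by (rule continuous_attains_sup_if_small_near_complement) blast+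
  then obtain p where "p \<in> B \<times> {0<..T}" and max: "\<And>p'. p' \<in> B \<times> {0<..T} \<Longrightarrow> f p' \<le> f p"
    by blast
  obtain x t where "p = (x, t)" by (cases p)
  show ?thesis
  proof
    show "x \<in> Omega_cl" "norm (x - c) \<le> R" "0 < t" "t \<le> T"
      using \<open>p \<in> B \<times> {0<..T}\<close> B \<open>p = (x, t)\<close> by auto
    show "u y s - barrier eps a \<eta> c C \<beta> \<tau> y s \<le> u x t - barrier eps a \<eta> c C \<beta> \<tau> x t"
      if "y \<in> Omega_cl" "norm (y - c) \<le> R" "0 < s" "s \<le> T" for y s
      using max[of "(y, s)"] that B \<open>p = (x, t)\<close> by (simp add: f_def)
    show "u x t > barrier eps a \<eta> c C \<beta> \<tau> x t"
      using max[of "(x0, t0)"] assms B \<open>p = (x, t)\<close> by (simp add: f_def)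
  qed
qed

(* For beta > 0 the barrier is no supersolution of the boundary condition (V_t < 0 at z = 0),
   so the flat boundary has to be controlled by hypothesis. *)
lemma weak_maximum_principle:
  assumes "snd c = 0" "\<eta> > 0" "\<beta> \<ge> 0" "\<tau> > 0"
    and "C * eps > 2 * DIM('a \<times> real)" "C * delta > 2 * k * DIM('a)"
    and lateral: "\<And>x t. x \<in> Omega_cl \<Longrightarrow> norm (x - c) = R \<Longrightarrow> 0 < t \<Longrightarrow> t \<le> T \<Longrightarrow>
      u x t \<le> barrier eps a \<eta> c C \<beta> \<tau> x t"
    and flat: "\<And>y t. \<beta> \<noteq> 0 \<Longrightarrow> norm ((y, 0) - c) \<le> R \<Longrightarrow> 0 < t \<Longrightarrow> t \<le> T \<Longrightarrow>
      u (y, 0) t \<le> barrier eps a \<eta> c C \<beta> \<tau> (y, 0) t"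
    and initial_le: "\<And>x e. x \<in> Omega_cl \<Longrightarrow> norm (x - c) \<le> R \<Longrightarrow> e > 0 \<Longrightarrow>
      \<exists>d>0. \<forall>y\<in>Omega_cl. \<forall>s. 0 < s \<and> s < d \<and> dist y x < d \<longrightarrow>
        u y s - barrier eps a \<eta> c C \<beta> \<tau> y s < e"
    and x: "x \<in> Omega_cl" "norm (x - c) \<le> R" "0 < t" "t \<le> T"
  shows "u x t \<le> barrier eps a \<eta> c C \<beta> \<tau> x t"
proof (rule ccontr)
  assume "\<not> ?thesis"
  then have "u x t > barrier eps a \<eta> c C \<beta> \<tau> x t" by simp
  from positive_max_on_cylinder[OF \<open>\<tau> > 0\<close> initial_le x this]
  obtain xm tm where xm: "xm \<in> Omega_cl" "norm (xm - c) \<le> R" "0 < tm" "tm \<le> T"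
    and pos: "u xm tm > barrier eps a \<eta> c C \<beta> \<tau> xm tm"
    and max: "\<And>y s. y \<in> Omega_cl \<Longrightarrow> norm (y - c) \<le> R \<Longrightarrow> 0 < s \<Longrightarrow> s \<le> T \<Longrightarrow>
      u y s - barrier eps a \<eta> c C \<beta> \<tau> y s \<le> u xm tm - barrier eps a \<eta> c C \<beta> \<tau> xm tm"
    by blast
  have "norm (xm - c) < R"
  proof (rule ccontr)
    assume "\<not> norm (xm - c) < R"
    then have "u xm tm \<le> barrier eps a \<eta> c C \<beta> \<tau> xm tm"
      using lateral[OF xm(1) _ xm(3,4)] xm(2) by simp
    with pos show False by simp
  qed
  obtain d where "d > 0"
    and max_space: "\<And>y. y \<in> Omega_cl \<Longrightarrow> y \<in> ball xm d \<Longrightarrow>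
      u y tm - barrier eps a \<eta> c C \<beta> \<tau> y tm \<le> u xm tm - barrier eps a \<eta> c C \<beta> \<tau> xm tm"
    and max_time: "\<And>s. tm - d < s \<Longrightarrow> s \<le> tm \<Longrightarrow>
      u xm s - barrier eps a \<eta> c C \<beta> \<tau> xm s \<le> u xm tm - barrier eps a \<eta> c C \<beta> \<tau> xm tm"
    using max_in_cylinder_is_local_max[OF \<open>norm (xm - c) < R\<close> xm(3,4), of Omega_cl
        "\<lambda>y s. u y s - barrier eps a \<eta> c C \<beta> \<tau> y s"] max xm(1,2) by metis
  show False
  proof (cases "snd xm > 0")
    case True
    then have "xm \<in> Omega" by (simp add: Omega_def)
    show False
      by (rule no_interior_max[OF \<open>xm \<in> Omega\<close> xm(3) \<open>\<tau> > 0\<close> \<open>\<eta> > 0\<close> \<open>\<beta> \<ge> 0\<close>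
          \<open>C * eps > _\<close> \<open>d > 0\<close> max_space max_time])
  next
    case False
    then obtain y where y: "xm = (y, 0)" using xm(1) by (cases xm) (auto simp: Omega_cl_def)
    have "\<beta> = 0"
    proof (rule ccontr)
      assume "\<beta> \<noteq> 0"
      from flat[OF this] xm y have "u xm tm \<le> barrier eps a \<eta> c C \<beta> \<tau> xm tm" by simp
      with pos show False by simp
    qed
    show False
    proof (rule no_boundary_max[OF xm(3) \<open>\<tau> > 0\<close> \<open>\<eta> > 0\<close> \<open>snd c = 0\<close> \<open>C * delta > _\<close> \<open>d > 0\<close>,
          of y a])
      show "u x tm - barrier eps a \<eta> c C 0 \<tau> x tm \<le> u (y, 0) tm - barrier eps a \<eta> c C 0 \<tau> (y, 0) tm"
        if "x \<in> Omega_cl" "x \<in> ball (y, 0) d" for x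
        using max_space that \<open>\<beta> = 0\<close> y by simp
      show "u (y, 0) s - barrier eps a \<eta> c C 0 \<tau> (y, 0) s
          \<le> u (y, 0) tm - barrier eps a \<eta> c C 0 \<tau> (y, 0) tm" if "tm - d < s" "s \<le> tm" for s
        using max_time that \<open>\<beta> = 0\<close> y by simp
    qed
  qed
qed

section \<open>The initial time\<close>

lemma initial_limsup_nonpos_interior:
  assumes "x \<in> Omega" "e > 0"
  obtains d where "d > 0" "\<And>y s. dist y x < d \<Longrightarrow> 0 \<le> s \<Longrightarrow> s < d \<Longrightarrow> y \<in> Omega \<and> u y s < e"
proof -
  obtain d0 where "d0 > 0" and d0: "\<forall>p\<in>Omega \<times> {0..}. dist p (x, 0) < d0 \<longrightarrow>
      dist ((\<lambda>(x, t). u x t) p) ((\<lambda>(x, t). u x t) (x, 0)) < e"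
    using continuous_initial assms unfolding continuous_on_iff by fastforce
  show ?thesis
  proof
    show "min d0 (snd x) / 2 > 0" using \<open>d0 > 0\<close> assms by (simp add: Omega_def)
    fix y s assume "dist y x < min d0 (snd x) / 2" "0 \<le> s" "s < min d0 (snd x) / 2"
    moreover have "snd x - snd y \<le> dist y x"
      using dist_snd_le[of y x] by (simp add: dist_real_def)
    ultimately have "y \<in> Omega" "dist (y, s) (x, 0) < d0"
      using dist_Pair_Pair[of y s x 0] sqrt_sum_squares_le_sum[of "dist y x" "dist s 0"]
      by (auto simp: Omega_def dist_real_def)
    with d0 \<open>0 \<le> s\<close> initial[OF \<open>x \<in> Omega\<close>] show "y \<in> Omega \<and> u y s < e"
      by (force simp: dist_real_def)
  qed
qed

lemma initial_limsup_nonpos_boundary_trace: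
  assumes "e > 0"
  obtains r where "r > 0" "\<And>y t. dist y y0 < r \<Longrightarrow> 0 \<le> t \<Longrightarrow> t < r \<Longrightarrow> u (y, 0) t < e"
proof -
  obtain r where "r > 0" and r: "\<forall>p\<in>UNIV \<times> {0..}. dist p (y0, 0) < r \<longrightarrow>
      dist ((\<lambda>(y, t). u (y, 0) t) p) ((\<lambda>(y, t). u (y, 0) t) (y0, 0)) < e"
    using continuous_boundary assms unfolding continuous_on_iff by fastforce
  show ?thesis
  proof
    fix y t assume "dist y y0 < r / 2" "0 \<le> t" "t < r / 2"
    then have "dist (y, t) (y0, 0) < r"
      using dist_Pair_Pair[of y t y0 0] sqrt_sum_squares_le_sum[of "dist y y0" "dist t 0"]
      by (simp add: dist_real_def)
    with r \<open>0 \<le> t\<close> initial_boundary[of y0] show "u (y, 0) t < e"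
      by (force simp: dist_real_def)
  qed (use \<open>r > 0\<close> in simp)
qed

lemma initial_limsup_le_barrier:
  assumes "\<tau> > 0" "a \<ge> 0" "\<eta> \<ge> 0" "C \<ge> 0" "M < \<beta> * exp (-1)"
    and "x \<in> Omega_cl" "e > 0"
  obtains d where "d > 0" "\<And>y s. y \<in> Omega_cl \<Longrightarrow> 0 < s \<Longrightarrow> s < d \<Longrightarrow> dist y x < d \<Longrightarrow>
    u y s - barrier eps a \<eta> c C \<beta> \<tau> y s < e"
proof -
  have "0 < \<beta> * exp (-1)" using bound_nonneg \<open>M < \<beta> * exp (-1)\<close> by linarith
  then have "\<beta> > 0" by (simp add: zero_less_mult_iff)
  show ?thesis
  proof (cases "snd x > 0")
    case True
    then have "x \<in> Omega" by (simp add: Omega_def)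
    then obtain d where "d > 0"
      and d: "\<And>y s. dist y x < d \<Longrightarrow> 0 \<le> s \<Longrightarrow> s < d \<Longrightarrow> y \<in> Omega \<and> u y s < e"
      using initial_limsup_nonpos_interior[OF _ \<open>e > 0\<close>] by metis
    have "u y s - barrier eps a \<eta> c C \<beta> \<tau> y s < e" if "0 < s" "s < d" "dist y x < d" for y s
      using d[of y s] barrier_nonneg[of a \<eta> C s \<beta> eps c \<tau> y] assms that \<open>\<beta> > 0\<close> by simp
    with \<open>d > 0\<close> that show ?thesis by blast
  next
    case False
    then have "snd x = 0" using \<open>x \<in> Omega_cl\<close> by (simp add: Omega_cl_def)
    obtain d where "d > 0" and d: "\<And>z s. \<bar>z\<bar> < d \<Longrightarrow> 0 \<le> s \<Longrightarrow> s < d \<Longrightarrow>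
        exp (-1) \<le> heat_kernel eps \<tau> z s"
      using heat_kernel_ge_exp_minus_one_near_boundary[OF \<open>\<tau> > 0\<close> less_imp_le[OF eps_pos]]
      by metis
    have "u y s - barrier eps a \<eta> c C \<beta> \<tau> y s < e"
      if "y \<in> Omega_cl" "0 < s" "s < d" "dist y x < d" for y s
    proof -
      have "\<bar>snd y\<bar> < d"
        using that dist_snd_le[of y x] \<open>snd x = 0\<close> by (simp add: dist_real_def)
      then have "\<beta> * exp (-1) \<le> \<beta> * heat_kernel eps \<tau> (snd y) s"
        using d that \<open>\<beta> > 0\<close> by simp
      moreover have "0 \<le> a + \<eta> * ((norm (y - c))\<^sup>2 + C * s)"
        using assms that by simp
      ultimately have "M < barrier eps a \<eta> c C \<beta> \<tau> y s"
        using \<open>M < \<beta> * exp (-1)\<close> unfolding barrier_def by linarith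
      with le_bound[of y s] that \<open>e > 0\<close> show ?thesis by simp
    qed
    with \<open>d > 0\<close> that show ?thesis by blast
  qed
qed

lemma barrier_dominates_near_corner:
  assumes "e > 0"
  obtains R \<eta> C where "0 < R" "R \<le> 1" "\<eta> > 0" "C > 0"
    "\<And>\<tau> x t. \<tau> > 0 \<Longrightarrow> x \<in> Omega_cl \<Longrightarrow> norm (x - (y0, 0)) \<le> R \<Longrightarrow> 0 < t \<Longrightarrow> t \<le> R \<Longrightarrow>
      u x t \<le> barrier eps e \<eta> (y0, 0) C (4 * (M + 1)) \<tau> x t"
proof -
  obtain C where "C > 0" "C * eps > 2 * DIM('a \<times> real)" "C * delta > 2 * k * DIM('a)"
    by (rule barrier_slope_exists)
  obtain r where "r > 0" and trace: "\<And>y t. dist y y0 < r \<Longrightarrow> 0 \<le> t \<Longrightarrow> t < r \<Longrightarrow> u (y, 0) t < e"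
    using initial_limsup_nonpos_boundary_trace[of e y0] \<open>e > 0\<close> by metis
  (* eta R^2 = M + 1 makes the barrier dominate on the lateral boundary, and beta / e > M near
     the flat boundary at small times. *)
  define R where "R = min 1 (r / 2)"
  define \<eta> where "\<eta> = (M + 1) / R\<^sup>2"
  define \<beta> where "\<beta> = 4 * (M + 1)"
  have "0 < R" "R \<le> 1" "R < r" using \<open>r > 0\<close> by (auto simp: R_def)
  have "\<eta> > 0" "\<beta> > 0" using bound_nonneg \<open>0 < R\<close> by (auto simp: \<eta>_def \<beta>_def)
  have "\<eta> * R\<^sup>2 = M + 1" using \<open>0 < R\<close> by (simp add: \<eta>_def)
  have barrier_ge: "e + \<eta> * (norm (x - (y0, 0)))\<^sup>2 \<le> barrier eps e \<eta> (y0, 0) C \<beta> \<tau> x t"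
    if "t \<ge> 0" for \<tau> x t
  proof -
    have "0 \<le> \<eta> * (C * t) + \<beta> * heat_kernel eps \<tau> (snd x) t"
      using \<open>\<eta> > 0\<close> \<open>\<beta> > 0\<close> \<open>C > 0\<close> that heat_kernel_pos[of eps \<tau> "snd x" t] by simp
    then show ?thesis by (simp add: barrier_def algebra_simps)
  qed
  have "exp 1 < (4::real)" using e_less_272 by simp
  then have "(M + 1) * exp 1 < \<beta>"
    using bound_nonneg mult_strict_left_mono[of "exp 1" 4 "M + 1"] by (simp add: \<beta>_def)
  then have "M * exp 1 < \<beta>" unfolding distrib_right using exp_gt_zero[of 1] by linarith
  then have "M < \<beta> * exp (-1)" by (simp add: exp_minus field_simps)
  have dominates: "u x t \<le> barrier eps e \<eta> (y0, 0) C \<beta> \<tau> x t"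
    if "\<tau> > 0" "x \<in> Omega_cl" "norm (x - (y0, 0)) \<le> R" "0 < t" "t \<le> R" for \<tau> x t
  proof (rule weak_maximum_principle[OF _ \<open>\<eta> > 0\<close> _ \<open>\<tau> > 0\<close> \<open>C * eps > _\<close> \<open>C * delta > _\<close> _ _ _ that(2-5)])
    show "u x t \<le> barrier eps e \<eta> (y0, 0) C \<beta> \<tau> x t"
      if "x \<in> Omega_cl" "norm (x - (y0, 0)) = R" "0 < t" "t \<le> R" for x t
    proof -
      have "u x t \<le> M" using le_bound that by simp
      also have "\<dots> < e + \<eta> * (norm (x - (y0, 0)))\<^sup>2" using that \<open>e > 0\<close> \<open>\<eta> * R\<^sup>2 = M + 1\<close> by simp
      also have "\<dots> \<le> barrier eps e \<eta> (y0, 0) C \<beta> \<tau> x t" using barrier_ge[of t x \<tau>] that by simp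
      finally show ?thesis by simp
    qed
    show "u (y, 0) t \<le> barrier eps e \<eta> (y0, 0) C \<beta> \<tau> (y, 0) t"
      if "norm ((y, 0) - (y0, 0)) \<le> R" "0 < t" "t \<le> R" for y t
    proof -
      have "u (y, 0) t < e" using trace[of y t] that \<open>R < r\<close> by (simp add: dist_norm)
      also have "\<dots> \<le> e + \<eta> * (norm ((y, 0::real) - (y0, 0)))\<^sup>2" using \<open>\<eta> > 0\<close> by simp
      also have "\<dots> \<le> barrier eps e \<eta> (y0, 0) C \<beta> \<tau> (y, 0) t"
        using barrier_ge[of t "(y, 0)" \<tau>] that by simp
      finally show ?thesis by simp
    qed
    show "\<exists>d>0. \<forall>y\<in>Omega_cl. \<forall>s. 0 < s \<and> s < d \<and> dist y x' < d \<longrightarrow>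
        u y s - barrier eps e \<eta> (y0, 0) C \<beta> \<tau> y s < e'"
      if "x' \<in> Omega_cl" "e' > 0" for x' e'
      using initial_limsup_le_barrier[OF \<open>\<tau> > 0\<close> _ _ _ \<open>M < \<beta> * exp (-1)\<close> that,
          of e \<eta> C "(y0, 0)"] \<open>e > 0\<close> \<open>\<eta> > 0\<close> \<open>C > 0\<close>
      by (metis less_imp_le)
  qed (use \<open>\<beta> > 0\<close> in simp_all)
  show ?thesis
    by (rule that[OF \<open>0 < R\<close> \<open>R \<le> 1\<close> \<open>\<eta> > 0\<close> \<open>C > 0\<close> dominates[unfolded \<beta>_def]])
qed

lemma initial_limsup_nonpos_corner:
  assumes "e > 0"
  obtains d where "d > 0" "\<And>x t. x \<in> Omega \<Longrightarrow> 0 < t \<Longrightarrow> t < d \<Longrightarrow> dist x (y0, 0) < d \<Longrightarrow> u x t < e"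
proof -
  define \<beta> where "\<beta> = 4 * (M + 1)"
  have "\<beta> > 0" using bound_nonneg by (simp add: \<beta>_def)
  obtain R \<eta> C where "0 < R" "R \<le> 1" "\<eta> > 0" "C > 0"
    and dominates: "\<And>\<tau> x t. \<tau> > 0 \<Longrightarrow> x \<in> Omega_cl \<Longrightarrow> norm (x - (y0, 0)) \<le> R \<Longrightarrow> 0 < t \<Longrightarrow>
      t \<le> R \<Longrightarrow> u x t \<le> barrier eps (e / 3) \<eta> (y0, 0) C \<beta> \<tau> x t"
    using barrier_dominates_near_corner[of "e / 3" y0] \<open>e > 0\<close> unfolding \<beta>_def by auto
  define d where "d = min R (e / (3 * (\<eta> * (1 + C))))"
  have "d > 0" "d \<le> R" using \<open>0 < R\<close> \<open>e > 0\<close> \<open>\<eta> > 0\<close> \<open>C > 0\<close> by (auto simp: d_def)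
  have "\<eta> * ((1 + C) * d) \<le> \<eta> * ((1 + C) * (e / (3 * (\<eta> * (1 + C)))))"
    using \<open>\<eta> > 0\<close> \<open>C > 0\<close> by (intro mult_left_mono) (auto simp: d_def)
  also have "\<dots> = e / 3"
    using \<open>\<eta> > 0\<close> \<open>C > 0\<close> nonzero_mult_div_cancel_left[of "\<eta> * (1 + C)" e]
    by (simp add: mult.assoc)
  finally have "\<eta> * ((1 + C) * d) \<le> e / 3" .
  show ?thesis
  proof (rule that[OF \<open>d > 0\<close>])
    fix x t assume "x \<in> Omega" "0 < t" "t < d" "dist x (y0, 0) < d"
    define \<tau> where "\<tau> = t * (e / (3 * \<beta>))\<^sup>2"
    have "\<tau> > 0" using \<open>0 < t\<close> \<open>e > 0\<close> \<open>\<beta> > 0\<close> by (simp add: \<tau>_def)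
    have n: "norm (x - (y0, 0)) < d" using \<open>dist x (y0, 0) < d\<close> by (simp add: dist_norm)
    have "norm (x - (y0, 0)) * norm (x - (y0, 0)) \<le> norm (x - (y0, 0))"
      using n \<open>d \<le> R\<close> \<open>R \<le> 1\<close> by (intro mult_left_le_one_le) auto
    then have "(norm (x - (y0, 0)))\<^sup>2 + C * t < (1 + C) * d"
      using n mult_strict_left_mono[OF \<open>t < d\<close> \<open>C > 0\<close>] by (simp add: power2_eq_square algebra_simps)
    then have "\<eta> * ((norm (x - (y0, 0)))\<^sup>2 + C * t) < e / 3"
      using \<open>\<eta> > 0\<close> \<open>\<eta> * ((1 + C) * d) \<le> e / 3\<close> by (meson mult_strict_left_mono less_le_trans)
    moreover have "\<beta> * heat_kernel eps \<tau> (snd x) t \<le> e / 3"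
    proof -
      have "heat_kernel eps \<tau> (snd x) t \<le> e / (3 * \<beta>)"
        unfolding \<tau>_def using \<open>0 < t\<close> \<open>e > 0\<close> \<open>\<beta> > 0\<close> eps_pos by (intro heat_kernel_le) auto
      then have "\<beta> * heat_kernel eps \<tau> (snd x) t \<le> \<beta> * (e / (3 * \<beta>))"
        using \<open>\<beta> > 0\<close> by (intro mult_left_mono) auto
      then show ?thesis using \<open>\<beta> > 0\<close> by simp
    qed
    moreover have "u x t \<le> barrier eps (e / 3) \<eta> (y0, 0) C \<beta> \<tau> x t"
      using dominates[OF \<open>\<tau> > 0\<close>] \<open>x \<in> Omega\<close> n \<open>d \<le> R\<close> \<open>0 < t\<close> \<open>t < d\<close>
      by (simp add: Omega_def Omega_cl_def)
    ultimately show "u x t < e" by (simp add: barrier_def)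
  qed
qed

lemma initial_limsup_nonpos:
  assumes "x \<in> Omega_cl" "e > 0"
  obtains d where "d > 0"
    "\<And>y s. y \<in> Omega_cl \<Longrightarrow> 0 < s \<Longrightarrow> s < d \<Longrightarrow> dist y x < d \<Longrightarrow> u y s < e"
proof (cases "snd x > 0")
  case True
  then have "x \<in> Omega" by (simp add: Omega_def)
  with initial_limsup_nonpos_interior[OF _ \<open>e > 0\<close>] that show ?thesis by (metis less_imp_le)
next
  case False
  then obtain y0 where x: "x = (y0, 0)"
    using \<open>x \<in> Omega_cl\<close> by (cases x) (simp add: Omega_cl_def)
  obtain d1 where "d1 > 0"
    and d1: "\<And>y s. y \<in> Omega \<Longrightarrow> 0 < s \<Longrightarrow> s < d1 \<Longrightarrow> dist y (y0, 0) < d1 \<Longrightarrow> u y s < e"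
    using initial_limsup_nonpos_corner[OF \<open>e > 0\<close>] by metis
  obtain d2 where "d2 > 0"
    and d2: "\<And>y s. dist y y0 < d2 \<Longrightarrow> 0 \<le> s \<Longrightarrow> s < d2 \<Longrightarrow> u (y, 0) s < e"
    using initial_limsup_nonpos_boundary_trace[OF \<open>e > 0\<close>] by metis
  show ?thesis
  proof (rule that[of "min d1 d2"])
    show "min d1 d2 > 0" using \<open>d1 > 0\<close> \<open>d2 > 0\<close> by simp
    fix y s assume "y \<in> Omega_cl" "0 < s" "s < min d1 d2" "dist y x < min d1 d2"
    show "u y s < e"
    proof (cases "snd y > 0")
      case True
      then show ?thesis
        using d1[of y s] \<open>0 < s\<close> \<open>s < min d1 d2\<close> \<open>dist y x < min d1 d2\<close> x by (simp add: Omega_def)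
    next
      case False
      then have "y = (fst y, 0)" using \<open>y \<in> Omega_cl\<close> by (simp add: Omega_cl_def prod_eq_iff)
      moreover have "dist (fst y) y0 < d2"
        using dist_fst_le[of y x] \<open>dist y x < min d1 d2\<close> x by simp
      ultimately show ?thesis
        using d2[of "fst y" s] \<open>0 < s\<close> \<open>s < min d1 d2\<close> by (metis less_imp_le min_less_iff_conj)
    qed
  qed
qed

lemma le_quadratic_barrier:
  assumes "x \<in> Omega_cl" "t > 0" "\<eta> > 0"
    and "C * eps > 2 * DIM('a \<times> real)" "C * delta > 2 * k * DIM('a)"
  shows "u x t \<le> \<eta> * ((norm x)\<^sup>2 + C * t)"
proof -
  have "0 < C * eps" using \<open>C * eps > _\<close> of_nat_0_le_iff[of "2 * DIM('a \<times> real)"] by linarith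
  then have "C > 0" using eps_pos by (simp add: zero_less_mult_iff)
  define R where "R = norm x + M / \<eta> + 1"
  have "0 \<le> M / \<eta>" using bound_nonneg \<open>\<eta> > 0\<close> by simp
  then have "M / \<eta> < R" "1 \<le> R" "norm x \<le> R" unfolding R_def using norm_ge_zero[of x] by linarith+
  moreover have "R \<le> R\<^sup>2" using \<open>1 \<le> R\<close> by (simp add: power2_eq_square)
  ultimately have "M / \<eta> < R\<^sup>2" by linarith
  then have "M < \<eta> * R\<^sup>2" using \<open>\<eta> > 0\<close> by (simp add: divide_less_eq mult.commute)
  have "u x t \<le> barrier eps 0 \<eta> 0 C 0 1 x t"
  proof (rule weak_maximum_principle[where R = R and T = t])
    show "u y s \<le> barrier eps 0 \<eta> 0 C 0 1 y s"
      if "y \<in> Omega_cl" "norm (y - 0) = R" "0 < s" "s \<le> t" for y s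
    proof -
      have "u y s \<le> M" using le_bound that by simp
      also have "\<dots> < \<eta> * R\<^sup>2" by fact
      also have "\<dots> \<le> barrier eps 0 \<eta> 0 C 0 1 y s"
        using that \<open>\<eta> > 0\<close> \<open>C > 0\<close> by (simp add: barrier_def)
      finally show ?thesis by simp
    qed
    show "\<exists>d>0. \<forall>y\<in>Omega_cl. \<forall>s. 0 < s \<and> s < d \<and> dist y x' < d \<longrightarrow>
        u y s - barrier eps 0 \<eta> 0 C 0 1 y s < e"
      if x': "x' \<in> Omega_cl" "e > 0" for x' e
    proof -
      obtain d where "d > 0"
        and d: "\<And>y s. y \<in> Omega_cl \<Longrightarrow> 0 < s \<Longrightarrow> s < d \<Longrightarrow> dist y x' < d \<Longrightarrow> u y s < e"
        using initial_limsup_nonpos[OF x'] by metis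
      have "0 \<le> barrier eps 0 \<eta> 0 C 0 1 y s" if "0 < s" for y s
        using \<open>\<eta> > 0\<close> \<open>C > 0\<close> that by (intro barrier_nonneg) auto
      with d \<open>d > 0\<close> show ?thesis by (smt (verit))
    qed
  qed (use assms \<open>norm x \<le> R\<close> in auto)
  then show ?thesis by (simp add: barrier_def)
qed

lemma solution_nonpos:
  assumes "x \<in> Omega_cl" "t > 0"
  shows "u x t \<le> 0"
proof (rule ccontr)
  assume "\<not> u x t \<le> 0"
  obtain C where "C > 0" "C * eps > 2 * DIM('a \<times> real)" "C * delta > 2 * k * DIM('a)"
    by (rule barrier_slope_exists)
  define P where "P = (norm x)\<^sup>2 + C * t"
  have "P \<ge> 0" using \<open>C > 0\<close> \<open>t > 0\<close> by (simp add: P_def)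
  have "u x t \<le> u x t / (2 * (P + 1)) * P"
    unfolding P_def using \<open>\<not> u x t \<le> 0\<close> \<open>P \<ge> 0\<close> assms \<open>C * eps > _\<close> \<open>C * delta > _\<close>
    by (intro le_quadratic_barrier) (auto simp: P_def)
  also have "\<dots> = u x t * (P / (2 * (P + 1)))" by simp
  also have "\<dots> < u x t * 1"
    using \<open>\<not> u x t \<le> 0\<close> \<open>P \<ge> 0\<close> by (intro mult_strict_left_mono) (auto simp: divide_less_eq)
  finally show False by simp
qed

end

lemma lap_uminus: "lap (- H) = - lap H"
  by (simp add: lap_def sum_negf blinfun.minus_left)

lemma lap_tan_uminus: "lap_tan (- H) = - lap_tan H"
  by (simp add: lap_tan_def sum_negf blinfun.minus_left)

lemma zero_data_bounded_solution_uminus: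
  assumes "zero_data_bounded_solution u Du D2u ut eps delta k M"
  shows "zero_data_bounded_solution (\<lambda>x t. - u x t) (\<lambda>x t. - Du x t) (\<lambda>x t. - D2u x t)
    (\<lambda>x t. - ut x t) eps delta k M"
proof -
  interpret zero_data_bounded_solution u Du D2u ut eps delta k M by (rule assms)
  have minus: "blinfun_apply (- L) = (\<lambda>h. - blinfun_apply L h)"
    for L :: "'x::real_normed_vector \<Rightarrow>\<^sub>L 'y::real_normed_vector"
    by (simp add: fun_eq_iff blinfun.minus_left)
  show ?thesis
  proof
    show "((\<lambda>y. - u y t) has_derivative blinfun_apply (- Du x t)) (at x within Omega_cl)"
      if "x \<in> Omega_cl" "t > 0" for x t
      unfolding minus using Du[OF that] by (rule has_derivative_minus)
    show "((\<lambda>y. - Du y t) has_derivative blinfun_apply (- D2u x t)) (at x within Omega_cl)"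
      if "x \<in> Omega" "t > 0" for x t
      unfolding minus using D2u[OF that] by (rule has_derivative_minus)
    show "((\<lambda>x. - Du x t) has_derivative blinfun_apply (- D2u (y, 0) t)) (at (y, 0) within Omega_cl)"
      if "k > 0" "t > 0" for y t
      unfolding minus using D2u_boundary[OF that] by (rule has_derivative_minus)
    show "continuous_on (Omega_cl \<times> {0<..}) (\<lambda>(x, t). - u x t)"
      using continuous_on_minus[OF continuous_solution] by (simp add: case_prod_beta)
    show "continuous_on (Omega \<times> {0..}) (\<lambda>(x, t). - u x t)"
      using continuous_on_minus[OF continuous_initial] by (simp add: case_prod_beta)
    show "continuous_on (UNIV \<times> {0..}) (\<lambda>(y, t). - u (y, 0) t)"
      using continuous_on_minus[OF continuous_boundary] by (simp add: case_prod_beta)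
  qed (use eps_pos delta_pos k_nonneg ut heat_eq boundary_eq initial initial_boundary bounded in
    \<open>auto intro: DERIV_minus simp: lap_uminus lap_tan_uminus blinfun.minus_left\<close>)
qed

lemma classical_HDD_zero_data_bounded_solution:
  fixes u :: "('a::euclidean_space \<times> real) \<Rightarrow> real \<Rightarrow> real"
  assumes "eps > 0" "delta > 0" "k > 0" and solution: "classical_HDD eps delta k u (\<lambda>_. 0) (\<lambda>_. 0)"
    and bounded: "\<forall>x\<in>Omega_cl. \<forall>t\<ge>0. \<bar>u x t\<bar> \<le> M"
  shows "\<exists>Du D2u ut. zero_data_bounded_solution u Du D2u ut eps delta k M"
proof -
  obtain Du D2u ut where
    D: "\<forall>x\<in>Omega_cl. \<forall>t>0.
          ((\<lambda>y. u y t) has_derivative blinfun_apply (Du x t)) (at x within Omega_cl) \<and>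
          ((\<lambda>y. Du y t) has_derivative blinfun_apply (D2u x t)) (at x within Omega_cl) \<and>
          ((\<lambda>s. u x s) has_real_derivative ut x t) (at t)"
    and rest: "continuous_on (Omega_cl \<times> {0<..}) (\<lambda>(x, t). u x t)"
      "continuous_on (Omega \<times> {0..}) (\<lambda>(x, t). u x t)"
      "continuous_on (UNIV \<times> {0..}) (\<lambda>(y, t). u (y, 0) t)"
      "\<forall>x\<in>Omega. \<forall>t>0. eps * ut x t - lap (D2u x t) = 0"
      "\<forall>y. \<forall>t>0. delta * ut (y, 0) t - k * lap_tan (D2u (y, 0) t) - Du (y, 0) t (0, 1) = 0"
      "\<forall>x\<in>Omega. u x 0 = 0" "\<forall>y. u (y, 0) 0 = 0"
    using solution unfolding classical_HDD_def by auto
  have "Omega \<subseteq> Omega_cl" "\<And>y. (y, 0) \<in> Omega_cl" by (auto simp: Omega_def Omega_cl_def)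
  then have "zero_data_bounded_solution u Du D2u ut eps delta k M"
    using assms(1-3) D rest bounded by unfold_locales (auto simp: algebra_simps)
  then show ?thesis by blast
qed

lemma classical_HD_zero_data_bounded_solution:
  fixes u :: "('a::euclidean_space \<times> real) \<Rightarrow> real \<Rightarrow> real"
  assumes "eps > 0" "delta > 0" and solution: "classical_HD eps delta u (\<lambda>_. 0) (\<lambda>_. 0)"
    and bounded: "\<forall>x\<in>Omega_cl. \<forall>t\<ge>0. \<bar>u x t\<bar> \<le> M"
  shows "\<exists>Du D2u ut. zero_data_bounded_solution u Du D2u ut eps delta 0 M"
proof -
  obtain Du D2u ut where
    D: "\<forall>x\<in>Omega_cl. \<forall>t>0.
          ((\<lambda>y. u y t) has_derivative blinfun_apply (Du x t)) (at x within Omega_cl) \<and>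
          ((\<lambda>s. u x s) has_real_derivative ut x t) (at t)"
    and D2: "\<forall>x\<in>Omega. \<forall>t>0. ((\<lambda>y. Du y t) has_derivative blinfun_apply (D2u x t)) (at x)"
    and rest: "continuous_on (Omega_cl \<times> {0<..}) (\<lambda>(x, t). u x t)"
      "continuous_on (Omega \<times> {0..}) (\<lambda>(x, t). u x t)"
      "continuous_on (UNIV \<times> {0..}) (\<lambda>(y, t). u (y, 0) t)"
      "\<forall>x\<in>Omega. \<forall>t>0. eps * ut x t - lap (D2u x t) = 0"
      "\<forall>y. \<forall>t>0. delta * ut (y, 0) t - Du (y, 0) t (0, 1) = 0"
      "\<forall>x\<in>Omega. u x 0 = 0" "\<forall>y. u (y, 0) 0 = 0"
    using solution unfolding classical_HD_def by auto
  have "Omega \<subseteq> Omega_cl" by (auto simp: Omega_def Omega_cl_def)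
  then have "zero_data_bounded_solution u Du D2u ut eps delta 0 M"
    using assms(1,2) D D2 rest bounded
    by unfold_locales (auto simp: algebra_simps intro: has_derivative_at_withinI)
  then show ?thesis by blast
qed

theorem proposition2p1:
  fixes u :: "('a::euclidean_space \<times> real) \<Rightarrow> real \<Rightarrow> real"
    and eps delta k :: real
  assumes "eps > 0" and "delta > 0" and "k \<ge> 0"
    and "if k > 0 then classical_HDD eps delta k u (\<lambda>_. 0) (\<lambda>_. 0)
         else classical_HD eps delta u (\<lambda>_. 0) (\<lambda>_. 0)"
    and "\<exists>M. \<forall>x\<in>Omega_cl. \<forall>t\<ge>0. \<bar>u x t\<bar> \<le> M"
    and "\<forall>T>0. \<exists>\<gamma>>0. \<forall>R>1.
           (\<integral>\<^sup>+ z. indicator {(x, t). x \<in> Omega \<and> R / 2 \<le> norm x \<and> norm x < R \<and> 0 < t \<and> t < T} z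
                    * ennreal ((u (fst z) (snd z))\<^sup>2) \<partial>lborel)
         + (\<integral>\<^sup>+ z. indicator {(y::'a, t). R / 2 \<le> norm y \<and> norm y < R \<and> 0 < t \<and> t < T} z
                    * ennreal ((u (fst z, 0) (snd z))\<^sup>2) \<partial>lborel)
         \<le> ennreal (exp (\<gamma> * R\<^sup>2))"
  shows "\<forall>x\<in>Omega_cl. \<forall>t>0. u x t = 0"
proof -
  obtain M where bounded: "\<forall>x\<in>Omega_cl. \<forall>t\<ge>0. \<bar>u x t\<bar> \<le> M" using assms(5) by blast
  have "\<exists>Du D2u ut. zero_data_bounded_solution u Du D2u ut eps delta k M"
  proof (cases "k > 0")
    case True
    then show ?thesis
      using classical_HDD_zero_data_bounded_solution assms(1,2,4) bounded by simp
  next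
    case False
    then have "k = 0" using \<open>k \<ge> 0\<close> by simp
    then show ?thesis
      using classical_HD_zero_data_bounded_solution assms(1,2,4) bounded by simp
  qed
  then obtain Du D2u ut where sol: "zero_data_bounded_solution u Du D2u ut eps delta k M"
    by blast
  note neg_sol = zero_data_bounded_solution_uminus[OF sol]
  show ?thesis
  proof (intro ballI allI impI)
    fix x :: "'a \<times> real" and t :: real assume "x \<in> Omega_cl" "t > 0"
    show "u x t = 0"
      using zero_data_bounded_solution.solution_nonpos[OF sol \<open>x \<in> Omega_cl\<close> \<open>t > 0\<close>]
        zero_data_bounded_solution.solution_nonpos[OF neg_sol \<open>x \<in> Omega_cl\<close> \<open>t > 0\<close>]
      by simp
  qed
qed

end
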